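(* Let $a\in C(\mathbb{R};\ell^{2}(\mathbb{Z}^{d}))$, $a(t,y)=\sum_{n}a_{n}(t)e^{in\cdot y}$, where $(a_n)$ is a (differentiable in time) solution of the system: for $n\in\bigcup_{\alpha\geq\alpha_{0}}\mathscr{C}_{\alpha}$, \[ i\partial_{t}a_{n}=2\sum_{(n_{1},n_{2},n_{3})\in\Lambda^{(1)}(n)}e^{it\Omega(\vec{n})}a_{n_{1}}\overline{a_{n_{2}}}a_{n_{3}}, \] and $i\partial_{t}a_{n}=0$ for all other $n\in\mathbb{Z}^d$. Then for every $\alpha\geq\alpha_{0}$, $\frac{d}{dt}\|\pi_{\alpha}a(t)\|_{\ell^{2}}^{2}=0$.
   Context: $\mathrm{A}$ is a real symmetric positive definite $d\times d$ matrix, $\lambda_{n}^{2}=n^{\intercal}\mathrm{A}n$, $|n|$ Euclidean norm, $\Omega(\vec{n})=\lambda_{n_{1}}^{2}-\lambda_{n_{2}}^{2}+\lambda_{n_{3}}^{2}-\lambda_{n}^{2}$ for $\vec n=(n_1,n_2,n_3,n)$. By a known result (Berti–Maspero), there exist $c(d)\in(0,2]$, $C(\mathrm{A},d)\geq2$ and a partition $(\mathscr{C}_{\alpha})_{\alpha\geq0}$ of $\mathbb{Z}^{d}$ with (i) $0\in\mathscr{C}_{0}$, $\max_{\mathscr{C}_{0}}|n|\leq C(\mathrm{A},d)$; (ii) $\max_{\mathscr{C}_{\alpha}}|n|\leq2\min_{\mathscr{C}_{\alpha}}|n|$ for $\alpha\geq1$; (iii) for $n_{1}\in\mathscr{C}_{\alpha_{1}},n_{2}\in\mathscr{C}_{\alpha_{2}}$,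 $\alpha_{1}\neq\alpha_{2}$: $|n_{1}-n_{2}|+|\lambda_{n_{1}}^{2}-\lambda_{n_{2}}^{2}|>(|n_{1}|+|n_{2}|)^{c(d)}$; such a partition is fixed. $K_{\alpha}=\min_{n\in\mathscr{C}_{\alpha}}|n|$ for $\alpha\geq1$, $\alpha_{0}=\min\{\alpha\geq1:K_{\alpha}\geq10^{10}C(\mathrm{A},d)\}$. For $n\in\mathscr{C}_{\alpha}$, $\alpha\geq\alpha_0$: $\Lambda^{(1)}(n)=\{(n_{1},n_{2},n_{3}): n_{1}-n_{2}+n_{3}=n,\ |\Omega(\vec n)|<1,\ n_{1}\in\mathscr{C}_{\alpha},\ |n_{2}|,|n_{3}|<10^{-5}K_{\alpha}\}$. For $u=\sum u_n e^{in\cdot y}$: $\pi_{\alpha}u=\sum_{n\in\mathscr{C}_{\alpha}}u_{n}e^{in\cdot y}$, $\|u\|_{\ell^{2}}=(\sum|u_{n}|^{2})^{1/2}$. *)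

theory Defs
  imports "HOL-Analysis.Analysis"
begin

definition rvec :: "int ^ 'd \<Rightarrow> real ^ 'd" where
  "rvec n = (\<chi> i. real_of_int (n $ i))"

definition lnorm :: "int ^ 'd \<Rightarrow> real" where
  "lnorm n = norm (rvec n)"

definition lam2 :: "real ^ 'd ^ 'd \<Rightarrow> int ^ 'd \<Rightarrow> real" where
  "lam2 A n = rvec n \<bullet> (A *v rvec n)"

definition Omega :: "real ^ 'd ^ 'd \<Rightarrow> int ^ 'd \<Rightarrow> int ^ 'd \<Rightarrow> int ^ 'd \<Rightarrow> int ^ 'd \<Rightarrow> real" where
  "Omega A n1 n2 n3 n = lam2 A n1 - lam2 A n2 + lam2 A n3 - lam2 A n"

definition pos_def_sym :: "real ^ 'd ^ 'd \<Rightarrow> bool" where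
  "pos_def_sym A \<longleftrightarrow> transpose A = A \<and> (\<forall>x. x \<noteq> 0 \<longrightarrow> x \<bullet> (A *v x) > 0)"

definition cell :: "(int ^ 'd \<Rightarrow> nat) \<Rightarrow> nat \<Rightarrow> (int ^ 'd) set" where
  "cell cls \<alpha> = {n. cls n = \<alpha>}"

text \<open>Properties (i)-(iii) of the Berti--Maspero partition, with constants c and C.\<close>
definition BM_partition :: "real ^ 'd ^ 'd \<Rightarrow> real \<Rightarrow> real \<Rightarrow> (int ^ 'd \<Rightarrow> nat) \<Rightarrow> bool" where
  "BM_partition A c C cls \<longleftrightarrow>
     0 < c \<and> c \<le> 2 \<and> C \<ge> 2 \<and>
     (\<forall>\<alpha>. cell cls \<alpha> \<noteq> {}) \<and>
     cls 0 = 0 \<and> (\<forall>n\<in>cell cls 0. lnorm n \<le> C) \<and>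
     (\<forall>\<alpha>\<ge>1. \<forall>n\<in>cell cls \<alpha>. \<forall>m\<in>cell cls \<alpha>. lnorm n \<le> 2 * lnorm m) \<and>
     (\<forall>n1 n2. cls n1 \<noteq> cls n2 \<longrightarrow>
        lnorm (n1 - n2) + \<bar>lam2 A n1 - lam2 A n2\<bar> > (lnorm n1 + lnorm n2) powr c)"

definition Kc :: "(int ^ 'd \<Rightarrow> nat) \<Rightarrow> nat \<Rightarrow> real" where
  "Kc cls \<alpha> = Min (lnorm ` cell cls \<alpha>)"

definition alpha0 :: "real \<Rightarrow> (int ^ 'd \<Rightarrow> nat) \<Rightarrow> nat" where
  "alpha0 C cls = (LEAST \<alpha>. \<alpha> \<ge> 1 \<and> Kc cls \<alpha> \<ge> 10^10 * C)"

definition Lambda1 :: "real ^ 'd ^ 'd \<Rightarrow> (int ^ 'd \<Rightarrow> nat) \<Rightarrow> int ^ 'd \<Rightarrow> ((int ^ 'd) \<times> (int ^ 'd) \<times> (int ^ 'd)) set" where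
  "Lambda1 A cls n = {(n1, n2, n3). n1 - n2 + n3 = n \<and> \<bar>Omega A n1 n2 n3 n\<bar> < 1 \<and>
      cls n1 = cls n \<and> lnorm n2 < 10 powr (-5) * Kc cls (cls n) \<and>
      lnorm n3 < 10 powr (-5) * Kc cls (cls n)}"

definition proj_norm2 :: "(int ^ 'd \<Rightarrow> nat) \<Rightarrow> nat \<Rightarrow> (int ^ 'd \<Rightarrow> complex) \<Rightarrow> real" where
  "proj_norm2 cls \<alpha> u = infsum (\<lambda>n. (cmod (u n))^2) (cell cls \<alpha>)"

end

theory Submission
  imports Defs
begin

text \<open>
  A cell \<open>C\<^sub>\<alpha>\<close> is a bounded set of lattice points, hence finite, so its energy is a finite
  sum that can be differentiated mode by mode. Inserting the equation, the derivative becomes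
  \<open>4 Im\<close> of the sum of \<open>exp(i t \<Omega>) a(n1) conj(a(n2)) a(n3) conj(a(n))\<close> over all \<open>n \<in> C\<^sub>\<alpha>\<close>
  and \<open>(n1, n2, n3) \<in> \<Lambda>\<^sup>1(n)\<close>. The involution \<open>(n, n1, n2, n3) \<mapsto> (n1, n, n3, n2)\<close> maps this
  index set onto itself (\<open>n1\<close> lies in the same cell as \<open>n\<close>) and conjugates each term (it
  flips the sign of \<open>\<Omega>\<close>), so the sum is real.
\<close>

lemma has_real_derivative_cmod_power2:
  fixes f :: "real \<Rightarrow> complex"
  assumes "(f has_vector_derivative D) (at t)"
  shows "((\<lambda>s. (cmod (f s))\<^sup>2) has_real_derivative 2 * Re (cnj (f t) * D)) (at t)"
proof -
  have re: "((\<lambda>s. Re (f s)) has_real_derivative Re D) (at t)"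
    and im: "((\<lambda>s. Im (f s)) has_real_derivative Im D) (at t)"
    using assms by (auto intro: has_field_derivative_Re has_field_derivative_Im)
  have "((\<lambda>s. Re (f s) * Re (f s) + Im (f s) * Im (f s)) has_real_derivative
      Re D * Re (f t) + Re D * Re (f t) + (Im D * Im (f t) + Im D * Im (f t))) (at t)"
    by (rule DERIV_add[OF DERIV_mult[OF re re] DERIV_mult[OF im im]])
  moreover have "(cmod (f s))\<^sup>2 = Re (f s) * Re (f s) + Im (f s) * Im (f s)" for s
    by (metis cmod_power2 power2_eq_square)
  ultimately show ?thesis by (simp add: algebra_simps)
qed

lemma Re_cnj_mult_eq_Im:
  fixes x y z :: complex
  assumes "\<i> * x = 2 * y"
  shows "2 * Re (cnj z * x) = 4 * Im (y * cnj z)"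
proof -
  have "x = - \<i> * (\<i> * x)" by (simp add: mult.assoc[symmetric])
  also have "\<dots> = - 2 * \<i> * y" using assms by simp
  finally show ?thesis by (simp add: mult_ac)
qed

lemma Im_sum_conj_involution:
  fixes G :: "'a \<Rightarrow> complex"
  assumes "\<And>p. p \<in> S \<Longrightarrow> \<sigma> p \<in> S"
    and "\<And>p. p \<in> S \<Longrightarrow> \<sigma> (\<sigma> p) = p"
    and "\<And>p. p \<in> S \<Longrightarrow> G (\<sigma> p) = cnj (G p)"
  shows "Im (sum G S) = 0"
proof -
  have "sum G S = sum (\<lambda>p. cnj (G p)) S"
    by (rule sum.reindex_bij_witness[where i = \<sigma> and j = \<sigma>]) (use assms in auto)
  then have "sum G S = cnj (sum G S)" by simp
  then show ?thesis by (metis cnj.simps(2) neg_equal_zero)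
qed

lemma finite_lnorm_le: "finite {n :: int ^ 'd. lnorm n \<le> R}"
proof -
  define k where "k = \<lceil>R\<rceil>"
  have "{n :: int ^ 'd. lnorm n \<le> R} \<subseteq> vec_lambda ` (PiE UNIV (\<lambda>_. {-k..k}))"
  proof
    fix n :: "int ^ 'd"
    assume "n \<in> {n. lnorm n \<le> R}"
    then have bound: "\<bar>real_of_int (n $ i)\<bar> \<le> R" for i
      using component_le_norm_cart[of "rvec n" i] by (simp add: rvec_def lnorm_def)
    have "n $ i \<in> {-k..k}" for i
      using bound[of i] unfolding k_def atLeastAtMost_iff by linarith
    then have "vec_nth n \<in> PiE UNIV (\<lambda>_. {-k..k})" by auto
    then show "n \<in> vec_lambda ` (PiE UNIV (\<lambda>_. {-k..k}))"
      by (metis image_eqI vec_nth_inverse)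
  qed
  moreover have "finite (PiE (UNIV :: 'd set) (\<lambda>_. {-k..k}))" by (intro finite_PiE) auto
  ultimately show ?thesis by (meson finite_imageI finite_subset)
qed

lemma finite_cell:
  assumes "BM_partition A c C cls"
  shows "finite (cell cls \<alpha>)"
proof -
  obtain m where m: "m \<in> cell cls \<alpha>" using assms unfolding BM_partition_def by blast
  have "lnorm n \<le> max C (2 * lnorm m)" if n: "n \<in> cell cls \<alpha>" for n
  proof (cases "\<alpha> = 0")
    case True
    then have "lnorm n \<le> C" using assms n unfolding BM_partition_def by blast
    then show ?thesis by simp
  next
    case False
    then have "\<alpha> \<ge> 1" by simp
    moreover have "\<forall>\<alpha>\<ge>1. \<forall>n\<in>cell cls \<alpha>. \<forall>m\<in>cell cls \<alpha>. lnorm n \<le> 2 * lnorm m"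
      using assms unfolding BM_partition_def by simp
    ultimately have "lnorm n \<le> 2 * lnorm m" using n m by blast
    then show ?thesis by simp
  qed
  then have "cell cls \<alpha> \<subseteq> {n. lnorm n \<le> max C (2 * lnorm m)}" by blast
  then show ?thesis using finite_lnorm_le finite_subset by blast
qed

lemma finite_Lambda1:
  fixes n :: "int ^ 'd"
  assumes "BM_partition A c C cls"
  shows "finite (Lambda1 A cls n)"
proof -
  define B where "B = {m :: int ^ 'd. lnorm m \<le> 10 powr (-5) * Kc cls (cls n)}"
  have "Lambda1 A cls n \<subseteq> cell cls (cls n) \<times> B \<times> B"
    unfolding Lambda1_def cell_def B_def by auto
  moreover have "finite (cell cls (cls n) \<times> B \<times> B)"
    unfolding B_def by (intro finite_cartesian_product finite_cell[OF assms] finite_lnorm_le)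
  ultimately show ?thesis using finite_subset by blast
qed

text \<open>Not a simp rule: it would loop.\<close>
lemma Omega_swap: "Omega A n n3 n2 n1 = - Omega A n1 n2 n3 n"
  unfolding Omega_def by simp

lemma Lambda1_swap:
  assumes "(n1, n2, n3) \<in> Lambda1 A cls n"
  shows "(n, n3, n2) \<in> Lambda1 A cls n1"
proof -
  have sum: "n1 - n2 + n3 = n" and resonant: "\<bar>Omega A n1 n2 n3 n\<bar> < 1"
    and same_cell: "cls n1 = cls n"
    and "lnorm n2 < 10 powr (-5) * Kc cls (cls n)" "lnorm n3 < 10 powr (-5) * Kc cls (cls n)"
    using assms unfolding Lambda1_def by auto
  moreover have "n - n3 + n2 = n1" using sum by (metis add.commute diff_diff_eq2 add_diff_cancel)
  moreover have "\<bar>Omega A n n3 n2 n1\<bar> < 1" using resonant by (subst Omega_swap) simp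
  ultimately show ?thesis unfolding Lambda1_def mem_Collect_eq prod.case same_cell by blast
qed

lemma Im_resonant_interaction:
  fixes u :: "int ^ 'd \<Rightarrow> complex"
  assumes "BM_partition A c C cls"
  shows "Im (\<Sum>n\<in>cell cls \<alpha>. (\<Sum>(n1, n2, n3)\<in>Lambda1 A cls n.
      exp (\<i> * complex_of_real (t * Omega A n1 n2 n3 n)) * u n1 * cnj (u n2) * u n3) * cnj (u n)) = 0"
proof -
  define S where "S = Sigma (cell cls \<alpha>) (Lambda1 A cls)"
  define g where "g = (\<lambda>(n, n1, n2, n3).
    exp (\<i> * complex_of_real (t * Omega A n1 n2 n3 n)) * u n1 * cnj (u n2) * u n3 * cnj (u n))"
  define \<sigma> :: "(int ^ 'd) \<times> (int ^ 'd) \<times> (int ^ 'd) \<times> (int ^ 'd) \<Rightarrow> _"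
    where "\<sigma> = (\<lambda>(n, n1, n2, n3). (n1, n, n3, n2))"
  have "(\<Sum>n\<in>cell cls \<alpha>. (\<Sum>(n1, n2, n3)\<in>Lambda1 A cls n.
      exp (\<i> * complex_of_real (t * Omega A n1 n2 n3 n)) * u n1 * cnj (u n2) * u n3) * cnj (u n))
    = sum g S"
    unfolding S_def g_def using finite_cell[OF assms] finite_Lambda1[OF assms]
    by (simp add: sum_distrib_right sum.Sigma split_def)
  also have "Im \<dots> = 0"
  proof (rule Im_sum_conj_involution[where \<sigma> = \<sigma>])
    fix p assume "p \<in> S"
    then obtain n n1 n2 n3 where p: "p = (n, n1, n2, n3)" and n: "n \<in> cell cls \<alpha>"
      and x: "(n1, n2, n3) \<in> Lambda1 A cls n"
      unfolding S_def by auto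
    have "cls n1 = cls n" using x unfolding Lambda1_def by auto
    then show "\<sigma> p \<in> S"
      using n Lambda1_swap[OF x] unfolding p \<sigma>_def S_def cell_def by simp
    show "\<sigma> (\<sigma> p) = p" unfolding p \<sigma>_def by simp
    show "g (\<sigma> p) = cnj (g p)"
      unfolding p \<sigma>_def g_def by (simp add: Omega_swap[of A n1 n2 n3 n] exp_cnj mult_ac)
  qed
  finally show ?thesis .
qed

theorem lemma2p9:
  fixes A :: "real ^ 'd ^ 'd" and c C :: real and cls :: "int ^ 'd \<Rightarrow> nat"
    and a :: "real \<Rightarrow> int ^ 'd \<Rightarrow> complex" and a' :: "real \<Rightarrow> int ^ 'd \<Rightarrow> complex"
  assumes A: "pos_def_sym A"
    and part: "BM_partition A c C cls"
    and l2: "\<forall>t. (\<lambda>n. (cmod (a t n))^2) summable_on UNIV"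
    and cont: "\<forall>t0. ((\<lambda>t. infsum (\<lambda>n. (cmod (a t n - a t0 n))^2) UNIV) \<longlongrightarrow> 0) (at t0)"
    and diff: "\<forall>t n. ((\<lambda>s. a s n) has_vector_derivative a' t n) (at t)"
    and eq_res: "\<forall>t n. cls n \<ge> alpha0 C cls \<longrightarrow>
        \<i> * a' t n = 2 * (\<Sum>(n1, n2, n3)\<in>Lambda1 A cls n.
           exp (\<i> * complex_of_real (t * Omega A n1 n2 n3 n)) * a t n1 * cnj (a t n2) * a t n3)"
    and eq_triv: "\<forall>t n. cls n < alpha0 C cls \<longrightarrow> \<i> * a' t n = 0"
    and \<alpha>: "\<alpha> \<ge> alpha0 C cls"
  shows "\<forall>t. ((\<lambda>s. proj_norm2 cls \<alpha> (a s)) has_real_derivative 0) (at t)"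
proof
  fix t
  define N where "N n = (\<Sum>(n1, n2, n3)\<in>Lambda1 A cls n.
    exp (\<i> * complex_of_real (t * Omega A n1 n2 n3 n)) * a t n1 * cnj (a t n2) * a t n3)" for n
  have energy: "proj_norm2 cls \<alpha> (a s) = (\<Sum>n\<in>cell cls \<alpha>. (cmod (a s n))\<^sup>2)" for s
    unfolding proj_norm2_def using finite_cell[OF part] by (simp add: infsum_finite)
  have derivative: "((\<lambda>s. proj_norm2 cls \<alpha> (a s)) has_real_derivative
      (\<Sum>n\<in>cell cls \<alpha>. 2 * Re (cnj (a t n) * a' t n))) (at t)"
    unfolding energy by (intro DERIV_sum has_real_derivative_cmod_power2) (use diff in blast)
  have mode: "2 * Re (cnj (a t n) * a' t n) = 4 * Im (N n * cnj (a t n))"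
    if "n \<in> cell cls \<alpha>" for n
    using eq_res \<alpha> that unfolding cell_def N_def by (intro Re_cnj_mult_eq_Im) auto
  have "(\<Sum>n\<in>cell cls \<alpha>. 2 * Re (cnj (a t n) * a' t n))
      = (\<Sum>n\<in>cell cls \<alpha>. 4 * Im (N n * cnj (a t n)))"
    by (rule sum.cong[OF refl mode])
  also have "\<dots> = 4 * Im (\<Sum>n\<in>cell cls \<alpha>. N n * cnj (a t n))"
    by (simp only: Im_sum sum_distrib_left)
  also have "\<dots> = 0"
    unfolding N_def by (simp only: Im_resonant_interaction[OF part] mult_zero_right)
  finally show "((\<lambda>s. proj_norm2 cls \<alpha> (a s)) has_real_derivative 0) (at t)"
    using derivative by simp
qed

end
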